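(* Let $\psi$ be a neighbor function with associated distance parameters $\sigma_1,\dots,\sigma_m$, let $\mu>0$, and let $Q_{\langle G,A_i\rangle}$ be a group-by sum query over confidential attribute $A_i$. Then the neighbor mechanism $M_\psi$, defined by $M_\psi(D)=\psi\big(Q_{\langle G,A_i\rangle}(D)\big)+N\big(\mathbf{0},\tfrac{\sigma_i^2}{\mu^2}\mathbf{I}\big)$ ($\psi$ applied to each entry of the query answer, and independent Gaussian noise of variance $\sigma_i^2/\mu^2$ added to each entry), satisfies $\mu$-Gaussian Establishment DP with neighbor function $\psi$ and distance parameters $\sigma_1,\dots,\sigma_m$.
   Context: A neighbor function is a function $\psi:\mathbb{R}_{\geq 0}\to\mathbb{R}$ that is strictly increasing, continuous, concave, and such that $x\mapsto\psi(e^{x})$ is convex. An establishment record is a tuple $r=(a_1,\dots,a_p,c_1,\dots,c_m)$ of public attribute values $a_1,\dots,a_p$ (of attributes $P_1,\dots,P_p$) and nonnegative real confidential attribute values $c_1,\dots,c_m$ (of attributes $A_1,\dots,A_m$); write $r[A_j]=c_j$. A dataset is a finite collection of records, one per establishment. Given nonnegative distance parameters $\sigma_1,\dots,\sigma_m$, a record $r$ is $\psi$-close to $r'$ if their public attribute values coincide and $|\psi(r[A_j])-\psi(r'[A_j])|\leq\sigma_j$ for all $j=1,\dots,m$. Datasets $D_1,D_2$ are $\psi$-neighbors if $D_1$ is obtained from $D_2$ by replacing one record $r$ with a record $r'$ that is $\psi$-close to $r$. A randomized mechanism $M$ satisfies $\mu$-Gaussian Establishment DP (with $\psi$ and $\sigma_1,\dots,\sigma_m$)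 if for all pairs of $\psi$-neighbors $D_1,D_2$ and all (measurable) sets $S$, $\Phi^{-1}(P(M(D_2)\in S))\leq\Phi^{-1}(P(M(D_1)\in S))+\mu$, where $\Phi$ is the standard normal CDF. A group-by sum query $Q_{\langle G,A_i\rangle}$ is given by a function $G$ of a record's public attribute values into a finite set of groups; its answer is the vector, indexed by the groups $g$, whose entry for $g$ is $\sum_{r\in D:\,G(r)=g} r[A_i]$. *)

theory Defs
  imports "HOL-Probability.Probability"
begin

definition neighbor_function :: "(real \<Rightarrow> real) \<Rightarrow> bool" where
  "neighbor_function \<psi> \<longleftrightarrow>
     strict_mono_on {0..} \<psi> \<and> continuous_on {0..} \<psi> \<and>
     concave_on {0..} \<psi> \<and> convex_on UNIV (\<lambda>x. \<psi> (exp x))"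

text \<open>A record is a pair (public attribute values, confidential attribute values);
  the confidential attributes A_1..A_m are represented by indices 0..m-1 of a function
  nat => real.\<close>

type_synonym 'p erecord = "'p \<times> (nat \<Rightarrow> real)"
type_synonym 'p dataset = "'p erecord list"

definition valid_record :: "nat \<Rightarrow> 'p erecord \<Rightarrow> bool" where
  "valid_record m r \<longleftrightarrow> (\<forall>j<m. snd r j \<ge> 0)"

definition valid_dataset :: "nat \<Rightarrow> 'p dataset \<Rightarrow> bool" where
  "valid_dataset m D \<longleftrightarrow> (\<forall>r\<in>set D. valid_record m r)"

definition psi_close ::
  "(real \<Rightarrow> real) \<Rightarrow> nat \<Rightarrow> (nat \<Rightarrow> real) \<Rightarrow> 'p erecord \<Rightarrow> 'p erecord \<Rightarrow> bool" where
  "psi_close \<psi> m \<sigma> r r' \<longleftrightarrow>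
     fst r = fst r' \<and> (\<forall>j<m. \<bar>\<psi> (snd r j) - \<psi> (snd r' j)\<bar> \<le> \<sigma> j)"

definition psi_neighbors ::
  "(real \<Rightarrow> real) \<Rightarrow> nat \<Rightarrow> (nat \<Rightarrow> real) \<Rightarrow> 'p dataset \<Rightarrow> 'p dataset \<Rightarrow> bool" where
  "psi_neighbors \<psi> m \<sigma> D1 D2 \<longleftrightarrow>
     (\<exists>k r'. k < length D2 \<and> psi_close \<psi> m \<sigma> (D2 ! k) r' \<and> D1 = D2[k := r'])"

definition groupby_sum :: "('p \<Rightarrow> 'g) \<Rightarrow> nat \<Rightarrow> 'p dataset \<Rightarrow> 'g \<Rightarrow> real" where
  "groupby_sum G i D = (\<lambda>g. sum_list (map (\<lambda>r. snd r i) (filter (\<lambda>r. G (fst r) = g) D)))"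

definition std_normal :: "real measure" where
  "std_normal = density lborel std_normal_density"

definition Phi :: "real \<Rightarrow> real" where
  "Phi x = measure std_normal {..x}"

definition Phi_inv :: "real \<Rightarrow> ereal" where
  "Phi_inv p = (if p \<le> 0 then -\<infinity> else if p \<ge> 1 then \<infinity> else ereal (THE x. Phi x = p))"

definition gaussian_establishment_dp ::
  "real \<Rightarrow> (real \<Rightarrow> real) \<Rightarrow> nat \<Rightarrow> (nat \<Rightarrow> real) \<Rightarrow> ('p dataset \<Rightarrow> 'o measure) \<Rightarrow> bool" where
  "gaussian_establishment_dp \<mu> \<psi> m \<sigma> M \<longleftrightarrow>
     (\<forall>D1 D2. valid_dataset m D1 \<longrightarrow> valid_dataset m D2 \<longrightarrow> psi_neighbors \<psi> m \<sigma> D1 D2 \<longrightarrow>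
        (\<forall>S \<in> sets (M D1). S \<in> sets (M D2) \<longrightarrow>
           Phi_inv (measure (M D2) S) \<le> Phi_inv (measure (M D1) S) + ereal \<mu>))"

text \<open>psi applied entrywise to the answer, plus independent N(0, s^2) noise per entry,
  realised as the image of a vector of iid standard normals Z under z |-> a + s z
  (this also covers s = 0, a point mass).\<close>
definition gaussian_vector :: "('g::finite \<Rightarrow> real) \<Rightarrow> real \<Rightarrow> ('g \<Rightarrow> real) measure" where
  "gaussian_vector a s =
     distr (PiM UNIV (\<lambda>_. std_normal)) (PiM UNIV (\<lambda>_. borel)) (\<lambda>z g. a g + s * z g)"

definition neighbor_mechanism ::
  "(real \<Rightarrow> real) \<Rightarrow> (nat \<Rightarrow> real) \<Rightarrow> real \<Rightarrow> ('p \<Rightarrow> 'g::finite) \<Rightarrow> nat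
     \<Rightarrow> 'p dataset \<Rightarrow> ('g \<Rightarrow> real) measure" where
  "neighbor_mechanism \<psi> \<sigma> \<mu> G i D =
     gaussian_vector (\<lambda>g. \<psi> (groupby_sum G i D g)) (\<sigma> i / \<mu>)"

end

theory Submission
  imports Defs
begin

text \<open>Replacing one record changes the group-by sum in a single group only, from \<open>R + c\<close> to
  \<open>R + c'\<close>, where \<open>R \<ge> 0\<close> is the contribution of the other records of that group. As \<psi> is
  increasing and concave, \<open>\<bar>\<psi> (R + c') - \<psi> (R + c)\<bar> \<le> \<bar>\<psi> c' - \<psi> c\<bar> \<le> \<sigma> i\<close>. After rescaling by the noise level \<open>\<sigma> i / \<mu>\<close>, the two
  outputs are thus a standard Gaussian vector and one shifted by at most \<mu> in a single
  coordinate. By the Neyman--Pearson lemma a half-space in that coordinate is the extremal event,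
  so an event of probability \<open>Phi u\<close> has probability at most \<open>Phi (u + \<mu>)\<close> under the shift.\<close>

section \<open>The standard normal distribution\<close>

lemma prob_space_std_normal: "prob_space std_normal"
  unfolding std_normal_def by (rule prob_space_normal_density) auto

lemma sets_std_normal [simp, measurable_cong]: "sets std_normal = sets borel"
  unfolding std_normal_def by simp

lemma space_std_normal [simp]: "space std_normal = UNIV"
  unfolding std_normal_def by simp

interpretation std_normal: real_distribution std_normal
  by (simp add: real_distribution_def real_distribution_axioms_def prob_space_std_normal)

lemma emeasure_std_normal:
  "A \<in> sets borel \<Longrightarrow>
     emeasure std_normal A = (\<integral>\<^sup>+x. ennreal (std_normal_density x) * indicator A x \<partial>lborel)"
  unfolding std_normal_def by (subst emeasure_density) auto

lemma nn_integral_std_normal: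
  "f \<in> borel_measurable borel \<Longrightarrow>
     (\<integral>\<^sup>+x. f x \<partial>std_normal) = (\<integral>\<^sup>+x. ennreal (std_normal_density x) * f x \<partial>lborel)"
  unfolding std_normal_def by (subst nn_integral_density) auto

lemma nn_integral_std_normal_reflect:
  assumes [measurable]: "f \<in> borel_measurable borel"
  shows "(\<integral>\<^sup>+x. f (- x) \<partial>std_normal) = (\<integral>\<^sup>+x. f x \<partial>std_normal)"
proof -
  have "(\<integral>\<^sup>+x. f (- x) \<partial>std_normal)
      = (\<integral>\<^sup>+x. (\<lambda>y. ennreal (std_normal_density y) * f y) (- x) \<partial>lborel)"
    by (simp add: nn_integral_std_normal std_normal_density_def)
  also have "\<dots> = (\<integral>\<^sup>+y. ennreal (std_normal_density y) * f y \<partial>distr lborel borel uminus)"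
    by (subst nn_integral_distr) auto
  finally show ?thesis
    by (simp add: lborel_distr_uminus nn_integral_std_normal)
qed

text \<open>The likelihood ratio of \<open>N(d, 1)\<close> with respect to \<open>N(0, 1)\<close>.\<close>
definition std_normal_lr :: "real \<Rightarrow> real \<Rightarrow> real" where
  "std_normal_lr d x = exp (d * x - d\<^sup>2 / 2)"

lemma std_normal_lr_measurable [measurable]: "std_normal_lr d \<in> borel_measurable borel"
  unfolding std_normal_lr_def by measurable

lemma std_normal_lr_0 [simp]: "std_normal_lr 0 x = 1"
  by (simp add: std_normal_lr_def)

lemma std_normal_density_diff:
  "std_normal_density (x - d) = std_normal_density x * std_normal_lr d x"
proof -
  have "- (x - d)\<^sup>2 / 2 = - x\<^sup>2 / 2 + (d * x - d\<^sup>2 / 2)"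
    by (simp add: power2_eq_square field_simps)
  then show ?thesis
    unfolding std_normal_density_def std_normal_lr_def by (simp add: exp_add[symmetric])
qed

lemma nn_integral_std_normal_shift:
  assumes [measurable]: "f \<in> borel_measurable borel"
  shows "(\<integral>\<^sup>+x. f (x + d) \<partial>std_normal) = (\<integral>\<^sup>+x. f x * ennreal (std_normal_lr d x) \<partial>std_normal)"
proof -
  have "(\<integral>\<^sup>+x. f (x + d) \<partial>std_normal)
      = (\<integral>\<^sup>+x. (\<lambda>y. ennreal (std_normal_density (y - d)) * f y) (d + x) \<partial>lborel)"
    by (simp add: nn_integral_std_normal add.commute)
  also have "\<dots> = (\<integral>\<^sup>+y. ennreal (std_normal_density (y - d)) * f y \<partial>distr lborel borel ((+) d))"
    by (subst nn_integral_distr) auto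
  also have "\<dots> = (\<integral>\<^sup>+y. ennreal (std_normal_density y) * (f y * ennreal (std_normal_lr d y)) \<partial>lborel)"
    by (auto simp: lborel_distr_plus std_normal_density_diff ennreal_mult' std_normal_lr_def mult_ac
        intro!: nn_integral_cong)
  finally show ?thesis
    by (simp add: nn_integral_std_normal)
qed

lemma Phi_eq_cdf: "Phi = cdf std_normal"
  by (simp add: fun_eq_iff Phi_def cdf_def2)

lemma emeasure_std_normal_atMost: "emeasure std_normal {..x} = ennreal (Phi x)"
  by (simp add: Phi_def std_normal.emeasure_eq_measure)

lemma emeasure_std_normal_atLeast: "emeasure std_normal {x..} = ennreal (Phi (- x))"
proof -
  have "emeasure std_normal {x..} = (\<integral>\<^sup>+y. indicator {x..} (- y) \<partial>std_normal)"
    by (subst nn_integral_std_normal_reflect) auto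
  also have "\<dots> = (\<integral>\<^sup>+y. indicator {..- x} y \<partial>std_normal)"
    by (intro nn_integral_cong) (auto simp: indicator_def)
  finally show ?thesis
    by (simp add: emeasure_std_normal_atMost)
qed

lemma emeasure_std_normal_halfline:
  assumes "e = 1 \<or> e = -1"
  shows "emeasure std_normal {x. c \<le> e * x} = ennreal (Phi (- c))"
  using assms
proof
  assume "e = 1"
  then show ?thesis
    by (simp add: atLeast_def[symmetric] emeasure_std_normal_atLeast)
next
  assume "e = -1"
  then have "{x. c \<le> e * x} = {..- c}"
    by auto
  then show ?thesis
    by (simp add: emeasure_std_normal_atMost)
qed

lemma nn_integral_std_normal_lr_halfline:
  assumes "e = 1 \<or> e = -1" "e * d = \<bar>d\<bar>"
  shows "(\<integral>\<^sup>+x. indicator {x. c \<le> e * x} x * ennreal (std_normal_lr d x) \<partial>std_normal)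
    = ennreal (Phi (\<bar>d\<bar> - c))"
proof -
  have "(\<integral>\<^sup>+x. indicator {x. c \<le> e * x} x * ennreal (std_normal_lr d x) \<partial>std_normal)
      = (\<integral>\<^sup>+x. indicator {x. c \<le> e * x} (x + d) \<partial>std_normal)"
    by (simp add: nn_integral_std_normal_shift)
  also have "\<dots> = (\<integral>\<^sup>+x. indicator {x. c - \<bar>d\<bar> \<le> e * x} x \<partial>std_normal)"
    by (intro nn_integral_cong) (simp add: indicator_def distrib_left assms(2))
  also have "\<dots> = ennreal (Phi (\<bar>d\<bar> - c))"
    using assms(1) by (simp add: emeasure_std_normal_halfline)
  finally show ?thesis .
qed

lemma isCont_Phi: "isCont Phi x"
proof -
  have "emeasure std_normal {x} = 0"
    by (auto simp: emeasure_std_normal intro!: nn_integral_null_set null_setsI)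
  then show ?thesis
    unfolding Phi_eq_cdf by (simp add: std_normal.isCont_cdf std_normal.emeasure_eq_measure)
qed

lemma Phi_strict_mono:
  assumes "x < y"
  shows "Phi x < Phi y"
proof -
  have "emeasure std_normal {x<..y} \<noteq> 0"
  proof
    assume "emeasure std_normal {x<..y} = 0"
    then have "AE z in lborel. ennreal (std_normal_density z) * indicator {x<..y} z = 0"
      by (simp add: emeasure_std_normal nn_integral_0_iff_AE)
    then have "AE z in lborel. z \<notin> {x<..y}"
      by (auto elim!: eventually_mono simp: indicator_def std_normal_density_def)
    then have "emeasure lborel {x<..y} = 0"
      by (subst (asm) AE_iff_measurable[of "{x<..y}"]) auto
    with assms show False
      by simp
  qed
  then have "0 < measure std_normal {x<..y}"
    by (simp add: std_normal.emeasure_eq_measure zero_less_measure_iff)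
  with std_normal.cdf_diff_eq[OF assms] show ?thesis
    by (simp add: Phi_eq_cdf)
qed

lemma Phi_le_iff [simp]: "Phi x \<le> Phi y \<longleftrightarrow> x \<le> y"
  by (metis Phi_strict_mono linorder_not_le order_less_imp_le order_less_le)

lemma Phi_pos: "0 < Phi x"
  using Phi_strict_mono[of "x - 1" x] std_normal.cdf_nonneg[of "x - 1"]
  by (simp add: Phi_eq_cdf)

lemma Phi_less_1: "Phi x < 1"
  using Phi_strict_mono[of x "x + 1"] std_normal.cdf_bounded_prob[of "x + 1"]
  by (simp add: Phi_eq_cdf)

lemma Phi_surj:
  assumes "0 < p" "p < 1"
  obtains x where "Phi x = p"
proof -
  have "eventually (\<lambda>x. Phi x < p) at_bot" "eventually (\<lambda>x. p < Phi x) at_top"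
    using order_tendstoD(2)[OF std_normal.cdf_lim_at_bot, of p]
      order_tendstoD(1)[OF std_normal.cdf_lim_at_top_prob, of p] assms
    by (simp_all add: Phi_eq_cdf)
  then obtain a b where "Phi a < p" "p < Phi b"
    by (auto simp: eventually_at_bot_linorder eventually_at_top_linorder)
  moreover from this have "a \<le> b"
    by (metis Phi_le_iff less_trans linorder_not_le order_less_imp_le)
  ultimately show ?thesis
    using IVT'[of Phi a p b] isCont_Phi that by (auto intro: continuous_at_imp_continuous_on)
qed

lemma Phi_inv_Phi [simp]: "Phi_inv (Phi x) = ereal x"
proof -
  have "(THE y. Phi y = Phi x) = x"
    by (rule the_equality) (auto simp: eq_iff)
  then show ?thesis
    using Phi_pos Phi_less_1 by (simp add: Phi_inv_def not_le)
qed

lemma Phi_inv_le: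
  assumes "p \<le> Phi x"
  shows "Phi_inv p \<le> ereal x"
proof (cases "p \<le> 0")
  case False
  with assms Phi_less_1[of x] obtain y where "Phi y = p"
    using Phi_surj[of p] by force
  with assms show ?thesis
    by auto
qed (simp add: Phi_inv_def)

section \<open>Standard Gaussian vectors\<close>

definition std_normal_vector :: "('g::finite \<Rightarrow> real) measure" where
  "std_normal_vector = PiM UNIV (\<lambda>_. std_normal)"

lemma product_prob_space_std_normal: "product_prob_space (\<lambda>_. std_normal)"
  by (rule product_prob_spaceI) (rule prob_space_std_normal)

lemma sets_std_normal_vector [measurable_cong]:
  "sets std_normal_vector = sets (PiM UNIV (\<lambda>_::'g::finite. borel))"
  unfolding std_normal_vector_def by (intro sets_PiM_cong) auto

lemma space_std_normal_vector [simp]: "space std_normal_vector = UNIV"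
  by (simp add: std_normal_vector_def space_PiM)

lemma prob_space_std_normal_vector: "prob_space std_normal_vector"
  unfolding std_normal_vector_def by (intro prob_space_PiM prob_space_std_normal)

lemma nn_integral_std_normal_vector_prod:
  fixes f :: "'g::finite \<Rightarrow> real \<Rightarrow> ennreal"
  assumes "\<And>g. f g \<in> borel_measurable borel"
  shows "(\<integral>\<^sup>+z. (\<Prod>g\<in>UNIV. f g (z g)) \<partial>std_normal_vector) = (\<Prod>g\<in>UNIV. integral\<^sup>N std_normal (f g))"
proof -
  interpret product_prob_space "\<lambda>_::'g. std_normal"
    by (rule product_prob_space_std_normal)
  show ?thesis
    unfolding std_normal_vector_def using assms by (intro product_nn_integral_prod) auto
qed

lemma nn_integral_std_normal_vector_component:
  assumes [measurable]: "f \<in> borel_measurable borel"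
  shows "(\<integral>\<^sup>+z. f (z g) \<partial>std_normal_vector) = (\<integral>\<^sup>+x. f x \<partial>std_normal)"
proof -
  have component_measurable: "(\<lambda>z. z g) \<in> std_normal_vector \<rightarrow>\<^sub>M std_normal"
    unfolding measurable_cong_sets[OF sets_std_normal_vector sets_std_normal] by measurable
  have "(\<integral>\<^sup>+z. f (z g) \<partial>std_normal_vector) = integral\<^sup>N (distr std_normal_vector std_normal (\<lambda>z. z g)) f"
    using component_measurable by (simp add: nn_integral_distr)
  also have "distr std_normal_vector std_normal (\<lambda>z. z g) = std_normal"
    unfolding std_normal_vector_def by (intro distr_PiM_component prob_space_std_normal) simp
  finally show ?thesis .
qed

lemma measurable_std_normal_vector_coordinatewise:
  assumes "\<And>g. f g \<in> borel_measurable borel"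
  shows "(\<lambda>z g. f g (z g)) \<in> std_normal_vector \<rightarrow>\<^sub>M (std_normal_vector :: ('g::finite \<Rightarrow> real) measure)"
  unfolding measurable_cong_sets[OF sets_std_normal_vector sets_std_normal_vector]
  using assms by (intro measurable_PiM_single') (auto simp: space_PiM)

lemma distr_std_normal_vector_shift:
  fixes v :: "'g::finite \<Rightarrow> real"
  shows "distr std_normal_vector std_normal_vector (\<lambda>z g. z g + v g)
    = density std_normal_vector (\<lambda>z. \<Prod>g\<in>UNIV. ennreal (std_normal_lr (v g) (z g)))"
    (is "?shifted = ?density")
proof (rule measure_eqI_PiM_finite[where I = UNIV and M = "\<lambda>_. std_normal" and A = "\<lambda>_. UNIV"])
  interpret prob_space "std_normal_vector :: ('g \<Rightarrow> real) measure"
    by (rule prob_space_std_normal_vector)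
  have shift_measurable: "(\<lambda>z g. z g + v g) \<in> std_normal_vector \<rightarrow>\<^sub>M std_normal_vector"
    by (rule measurable_std_normal_vector_coordinatewise) simp
  show "sets ?shifted = PiM UNIV (\<lambda>_. std_normal)" "sets ?density = PiM UNIV (\<lambda>_. std_normal)"
    by (simp_all add: std_normal_vector_def)
  show "range (\<lambda>_. UNIV) \<subseteq> prod_algebra UNIV (\<lambda>_::'g. std_normal)"
    using prod_algebraI_finite[of UNIV "\<lambda>_. UNIV" "\<lambda>_::'g. std_normal"]
    by (auto simp: PiE_UNIV_domain)
  show "emeasure ?shifted UNIV \<noteq> \<infinity>"
    using prob_space.emeasure_space_1[OF prob_space_distr[OF shift_measurable]] by simp
  fix A :: "'g \<Rightarrow> real set"
  assume "\<And>g. g \<in> UNIV \<Longrightarrow> A g \<in> sets std_normal"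
  then have [measurable]: "A g \<in> sets borel" for g
    by simp
  have box: "Pi\<^sub>E UNIV A \<in> sets std_normal_vector"
    unfolding sets_std_normal_vector by (rule sets_PiM_I_finite) auto
  have indicator_box: "indicator (Pi\<^sub>E UNIV A) z = (\<Prod>g\<in>UNIV. indicator (A g) (z g) :: ennreal)"
    for z :: "'g \<Rightarrow> real"
    by (auto simp: indicator_def PiE_iff prod_zero_iff)
  have "emeasure ?shifted (Pi\<^sub>E UNIV A) = (\<integral>\<^sup>+z. indicator (Pi\<^sub>E UNIV A) z \<partial>?shifted)"
    using box by simp
  also have "\<dots> = (\<integral>\<^sup>+z. indicator (Pi\<^sub>E UNIV A) (\<lambda>g. z g + v g) \<partial>std_normal_vector)"
    using box shift_measurable by (intro nn_integral_distr) auto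
  also have "\<dots> = (\<Prod>g\<in>UNIV. \<integral>\<^sup>+x. indicator (A g) (x + v g) \<partial>std_normal)"
    unfolding indicator_box by (rule nn_integral_std_normal_vector_prod) measurable
  also have "\<dots> = (\<Prod>g\<in>UNIV. \<integral>\<^sup>+x. indicator (A g) x * ennreal (std_normal_lr (v g) x) \<partial>std_normal)"
    by (simp add: nn_integral_std_normal_shift)
  also have "\<dots> = (\<integral>\<^sup>+z. (\<Prod>g\<in>UNIV. indicator (A g) (z g) * ennreal (std_normal_lr (v g) (z g)))
      \<partial>std_normal_vector)"
    by (rule nn_integral_std_normal_vector_prod[symmetric]) measurable
  also have "\<dots> = (\<integral>\<^sup>+z. (\<Prod>g\<in>UNIV. ennreal (std_normal_lr (v g) (z g))) * indicator (Pi\<^sub>E UNIV A) z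
      \<partial>std_normal_vector)"
    by (simp add: indicator_box prod.distrib mult.commute)
  also have "\<dots> = emeasure ?density (Pi\<^sub>E UNIV A)"
    using box by (simp add: emeasure_density)
  finally show "emeasure ?shifted (Pi\<^sub>E UNIV A) = emeasure ?density (Pi\<^sub>E UNIV A)" .
qed (simp_all add: space_PiM)

lemma emeasure_std_normal_vector_shift:
  fixes v :: "'g::finite \<Rightarrow> real"
  assumes "T \<in> sets std_normal_vector"
  shows "emeasure std_normal_vector ((\<lambda>z g. z g + v g) -` T)
    = (\<integral>\<^sup>+z. (\<Prod>g\<in>UNIV. ennreal (std_normal_lr (v g) (z g))) * indicator T z \<partial>std_normal_vector)"
proof -
  have "(\<lambda>z g. z g + v g) \<in> std_normal_vector \<rightarrow>\<^sub>M std_normal_vector"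
    by (rule measurable_std_normal_vector_coordinatewise) simp
  then have "emeasure std_normal_vector ((\<lambda>z g. z g + v g) -` T)
      = emeasure (distr std_normal_vector std_normal_vector (\<lambda>z g. z g + v g)) T"
    using assms by (simp add: emeasure_distr)
  with assms show ?thesis
    by (simp add: distr_std_normal_vector_shift emeasure_density)
qed

lemma emeasure_std_normal_vector_shift_single:
  fixes v :: "'g::finite \<Rightarrow> real"
  assumes "T \<in> sets std_normal_vector" and "\<And>g. g \<noteq> g0 \<Longrightarrow> v g = 0"
  shows "emeasure std_normal_vector ((\<lambda>z g. z g + v g) -` T)
    = (\<integral>\<^sup>+z. ennreal (std_normal_lr (v g0) (z g0)) * indicator T z \<partial>std_normal_vector)"
proof -
  have "(\<Prod>g\<in>UNIV. ennreal (std_normal_lr (v g) (z g)))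
      = (\<Prod>g\<in>UNIV. if g = g0 then ennreal (std_normal_lr (v g0) (z g0)) else 1)" for z
    using assms(2) by (intro prod.cong) auto
  with assms(1) show ?thesis
    by (simp add: emeasure_std_normal_vector_shift)
qed

section \<open>The Gaussian trade-off bound\<close>

lemma nn_integral_indicator_le_level_set:
  fixes F :: "'a \<Rightarrow> ennreal"
  assumes [measurable]: "T \<in> sets M" "B \<in> sets M" "F \<in> borel_measurable M"
    and above: "\<And>x. x \<in> B \<Longrightarrow> c \<le> F x"
    and below: "\<And>x. x \<in> space M \<Longrightarrow> x \<notin> B \<Longrightarrow> F x \<le> c"
    and "emeasure M T \<le> emeasure M B" "c * emeasure M B \<noteq> \<infinity>"
  shows "(\<integral>\<^sup>+x. F x * indicator T x \<partial>M) \<le> (\<integral>\<^sup>+x. F x * indicator B x \<partial>M)"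
proof -
  have "(\<integral>\<^sup>+x. F x * indicator T x \<partial>M) + c * emeasure M B
      = (\<integral>\<^sup>+x. F x * indicator T x + c * indicator B x \<partial>M)"
    by (simp add: nn_integral_add nn_integral_cmult_indicator)
  also have "\<dots> \<le> (\<integral>\<^sup>+x. F x * indicator B x + c * indicator T x \<partial>M)"
    using above below by (intro nn_integral_mono) (auto simp: indicator_def)
  also have "\<dots> = (\<integral>\<^sup>+x. F x * indicator B x \<partial>M) + c * emeasure M T"
    by (simp add: nn_integral_add nn_integral_cmult_indicator)
  also have "\<dots> \<le> (\<integral>\<^sup>+x. F x * indicator B x \<partial>M) + c * emeasure M B"
    using assms by (intro add_left_mono mult_left_mono) auto
  finally show ?thesis
    using assms by (metis add.commute ennreal_add_left_cancel_le)
qed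

lemma std_normal_vector_halfspace:
  fixes g :: "'g::finite" and c d e :: real
  assumes e: "e = 1 \<or> e = -1" "e * d = \<bar>d\<bar>"
  defines "B \<equiv> {z :: 'g \<Rightarrow> real. c \<le> e * z g}"
  shows "B \<in> sets std_normal_vector"
    and "emeasure std_normal_vector B = ennreal (Phi (- c))"
    and "(\<integral>\<^sup>+z. ennreal (std_normal_lr d (z g)) * indicator B z \<partial>std_normal_vector)
      = ennreal (Phi (\<bar>d\<bar> - c))"
proof -
  have "{z \<in> space std_normal_vector. c \<le> e * z g} \<in> sets std_normal_vector"
    by measurable
  then show B_sets: "B \<in> sets std_normal_vector"
    by (simp add: B_def)
  have "emeasure std_normal_vector B = (\<integral>\<^sup>+z. indicator {x. c \<le> e * x} (z g) \<partial>std_normal_vector)"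
    using B_sets by (simp add: B_def indicator_def flip: nn_integral_indicator)
  also have "\<dots> = ennreal (Phi (- c))"
    using e by (simp add: nn_integral_std_normal_vector_component emeasure_std_normal_halfline)
  finally show "emeasure std_normal_vector B = ennreal (Phi (- c))" .
  have "(\<integral>\<^sup>+z. ennreal (std_normal_lr d (z g)) * indicator B z \<partial>std_normal_vector)
      = (\<integral>\<^sup>+z. indicator {x. c \<le> e * x} (z g) * ennreal (std_normal_lr d (z g)) \<partial>std_normal_vector)"
    by (intro nn_integral_cong) (simp add: B_def indicator_def)
  also have "\<dots> = (\<integral>\<^sup>+x. indicator {x. c \<le> e * x} x * ennreal (std_normal_lr d x) \<partial>std_normal)"
    by (rule nn_integral_std_normal_vector_component) measurable
  also have "\<dots> = ennreal (Phi (\<bar>d\<bar> - c))"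
    using e by (rule nn_integral_std_normal_lr_halfline)
  finally show "(\<integral>\<^sup>+z. ennreal (std_normal_lr d (z g)) * indicator B z \<partial>std_normal_vector)
      = ennreal (Phi (\<bar>d\<bar> - c))" .
qed

text \<open>The optimal test is the half-space \<open>B\<close> on which the likelihood ratio of the shift is large.\<close>
lemma measure_std_normal_vector_shift_le:
  fixes v :: "'g::finite \<Rightarrow> real"
  assumes T: "T \<in> sets std_normal_vector" and u: "measure std_normal_vector T = Phi u"
    and v: "\<And>g. g \<noteq> g0 \<Longrightarrow> v g = 0"
  shows "measure std_normal_vector ((\<lambda>z g. z g + v g) -` T) \<le> Phi (u + \<bar>v g0\<bar>)"
proof -
  interpret prob_space "std_normal_vector :: ('g \<Rightarrow> real) measure"
    by (rule prob_space_std_normal_vector)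
  define d where "d = v g0"
  define e :: real where "e = (if 0 \<le> d then 1 else -1)"
  define B where "B = {z :: 'g \<Rightarrow> real. - u \<le> e * z g0}"
  define F where "F z = ennreal (std_normal_lr d (z g0))" for z :: "'g \<Rightarrow> real"
  define c where "c = exp (- \<bar>d\<bar> * u - d\<^sup>2 / 2)"
  have e: "e = 1 \<or> e = -1" "e * d = \<bar>d\<bar>"
    by (auto simp: e_def)
  note B = std_normal_vector_halfspace[OF e, where g = g0 and c = "- u", folded B_def]
  have lr_eq: "std_normal_lr d x = exp (\<bar>d\<bar> * (e * x) - d\<^sup>2 / 2)" for x
    by (auto simp: std_normal_lr_def e_def)
  have "emeasure std_normal_vector ((\<lambda>z g. z g + v g) -` T) = (\<integral>\<^sup>+z. F z * indicator T z \<partial>std_normal_vector)"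
    using T v by (simp add: emeasure_std_normal_vector_shift_single F_def d_def)
  also have "\<dots> \<le> (\<integral>\<^sup>+z. F z * indicator B z \<partial>std_normal_vector)"
  proof (rule nn_integral_indicator_le_level_set[where c = "ennreal c"])
    show "ennreal c \<le> F z" if "z \<in> B" for z
    proof -
      have "\<bar>d\<bar> * - u \<le> \<bar>d\<bar> * (e * z g0)"
        using that by (intro mult_left_mono) (simp_all add: B_def)
      then show ?thesis
        by (simp add: F_def c_def lr_eq)
    qed
    show "F z \<le> ennreal c" if "z \<notin> B" for z
    proof -
      have "\<bar>d\<bar> * (e * z g0) \<le> \<bar>d\<bar> * - u"
        using that by (intro mult_left_mono) (simp_all add: B_def)
      then show ?thesis
        by (simp add: F_def c_def lr_eq)
    qed
    show "emeasure std_normal_vector T \<le> emeasure std_normal_vector B"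
      by (simp add: B(2) emeasure_eq_measure[of T] u)
  qed (use T B(1) in \<open>simp_all add: F_def B(2) ennreal_mult_eq_top_iff\<close>)
  also have "\<dots> = ennreal (Phi (u + \<bar>d\<bar>))"
    using B(3) by (simp add: F_def add.commute)
  finally show ?thesis
    using Phi_pos[of "u + \<bar>d\<bar>"] by (simp add: emeasure_eq_measure d_def)
qed

lemma Phi_inv_std_normal_vector_shift_le:
  fixes v :: "'g::finite \<Rightarrow> real"
  assumes T: "T \<in> sets std_normal_vector"
    and v: "\<And>g. g \<noteq> g0 \<Longrightarrow> v g = 0" and "\<bar>v g0\<bar> \<le> \<mu>"
  shows "Phi_inv (measure std_normal_vector ((\<lambda>z g. z g + v g) -` T))
    \<le> Phi_inv (measure std_normal_vector T) + ereal \<mu>"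
proof -
  interpret prob_space "std_normal_vector :: ('g \<Rightarrow> real) measure"
    by (rule prob_space_std_normal_vector)
  consider "measure std_normal_vector T = 0" | "measure std_normal_vector T = 1"
    | "0 < measure std_normal_vector T" "measure std_normal_vector T < 1"
    using measure_nonneg[of std_normal_vector T] prob_le_1[of T] by linarith
  then show ?thesis
  proof cases
    case 1
    then have "T \<in> null_sets std_normal_vector"
      using T by (simp add: null_sets_def emeasure_eq_measure)
    then have "measure std_normal_vector ((\<lambda>z g. z g + v g) -` T) = 0"
      using T by (simp add: measure_def emeasure_std_normal_vector_shift nn_integral_null_set)
    with 1 show ?thesis
      by (simp add: Phi_inv_def)
  next
    case 2
    then show ?thesis
      by (simp add: Phi_inv_def)
  next
    case 3
    then obtain u where u: "Phi u = measure std_normal_vector T"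
      by (rule Phi_surj)
    have "Phi_inv (measure std_normal_vector ((\<lambda>z g. z g + v g) -` T)) \<le> ereal (u + \<bar>v g0\<bar>)"
      using measure_std_normal_vector_shift_le[OF T u[symmetric] v] by (intro Phi_inv_le)
    also have "\<dots> \<le> Phi_inv (measure std_normal_vector T) + ereal \<mu>"
      using assms(3) by (simp flip: u)
    finally show ?thesis .
  qed
qed

lemma measure_gaussian_vector:
  fixes a :: "'g::finite \<Rightarrow> real"
  assumes "S \<in> sets (PiM UNIV (\<lambda>_::'g. borel))"
  shows "measure (gaussian_vector a s) S = measure std_normal_vector ((\<lambda>z g. a g + s * z g) -` S)"
proof -
  have "(\<lambda>z g. a g + s * z g) \<in> std_normal_vector \<rightarrow>\<^sub>M std_normal_vector"
    by (rule measurable_std_normal_vector_coordinatewise) simp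
  with assms show ?thesis
    unfolding gaussian_vector_def std_normal_vector_def[symmetric]
    by (simp add: measure_distr measurable_cong_sets[OF refl sets_std_normal_vector])
qed

lemma Phi_inv_gaussian_vector_le:
  fixes a1 a2 :: "'g::finite \<Rightarrow> real"
  assumes "0 \<le> s" "0 \<le> \<mu>"
    and same: "\<And>g. g \<noteq> g0 \<Longrightarrow> a1 g = a2 g" and close: "\<bar>a2 g0 - a1 g0\<bar> \<le> \<mu> * s"
    and S: "S \<in> sets (PiM UNIV (\<lambda>_::'g. borel))"
  shows "Phi_inv (measure (gaussian_vector a2 s) S)
    \<le> Phi_inv (measure (gaussian_vector a1 s) S) + ereal \<mu>"
proof (cases "s = 0")
  case True
  with same close have "a1 = a2"
    by (metis abs_le_zero_iff eq_iff_diff_eq_0 mult_zero_right ext)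
  with \<open>0 \<le> \<mu>\<close> show ?thesis
    by (simp add: ereal_le_add_self)
next
  case False
  define v where "v g = (a2 g - a1 g) / s" for g
  define T where "T = (\<lambda>z g. a1 g + s * z g) -` S"
  have "(\<lambda>z g. a1 g + s * z g) \<in> std_normal_vector \<rightarrow>\<^sub>M std_normal_vector"
    by (rule measurable_std_normal_vector_coordinatewise) simp
  then have T_sets: "T \<in> sets std_normal_vector"
    using measurable_sets[of _ std_normal_vector std_normal_vector S] S
    by (simp add: T_def sets_std_normal_vector)
  have "(\<lambda>g. a1 g + s * (z g + v g)) = (\<lambda>g. a2 g + s * z g)" for z
    using False by (simp add: v_def distrib_left add.commute)
  then have preimage: "(\<lambda>z g. a2 g + s * z g) -` S = (\<lambda>z g. z g + v g) -` T"
    by (simp add: T_def vimage_def)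
  have v_bound: "\<bar>v g0\<bar> \<le> \<mu>"
    using close False \<open>0 \<le> s\<close> by (simp add: v_def abs_divide divide_le_eq mult.commute)
  have v_support: "v g = 0" if "g \<noteq> g0" for g
    using same[OF that] by (simp add: v_def)
  have "Phi_inv (measure std_normal_vector ((\<lambda>z g. z g + v g) -` T))
      \<le> Phi_inv (measure std_normal_vector T) + ereal \<mu>"
    using T_sets v_support v_bound by (rule Phi_inv_std_normal_vector_shift_le)
  then show ?thesis
    by (simp add: measure_gaussian_vector[OF S] preimage T_def)
qed

section \<open>Sensitivity of the group-by sum\<close>

lemma concave_on_endpoints_le:
  fixes f :: "real \<Rightarrow> real"
  assumes f: "concave_on A f" and "a \<in> A" "b \<in> A" "a \<le> p" "p \<le> b" "p + q = a + b"
  shows "f a + f b \<le> f p + f q"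
proof (cases "a = b")
  case False
  define t where "t = (p - a) / (b - a)"
  have "a < b"
    using assms False by linarith
  then have t: "0 \<le> t" "t \<le> 1" "0 \<le> 1 - t" "1 - t \<le> 1"
    using assms by (auto simp: t_def divide_le_eq_1)
  have "t * (b - a) = p - a"
    using \<open>a < b\<close> by (simp add: t_def)
  then have p: "(1 - t) *\<^sub>R a + t *\<^sub>R b = p" and q: "(1 - (1 - t)) *\<^sub>R a + (1 - t) *\<^sub>R b = q"
    using \<open>p + q = a + b\<close> by (simp_all add: algebra_simps; linarith)+
  have "(1 - t) * f a + t * f b \<le> f p"
    using concave_onD[OF f t(1,2) \<open>a \<in> A\<close> \<open>b \<in> A\<close>] unfolding p .
  moreover have "(1 - (1 - t)) * f a + (1 - t) * f b \<le> f q"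
    using concave_onD[OF f t(3,4) \<open>a \<in> A\<close> \<open>b \<in> A\<close>] unfolding q .
  ultimately show ?thesis
    by (simp add: left_diff_distrib)
qed (use assms in auto)

lemma abs_diff_add_le_concave:
  fixes f :: "real \<Rightarrow> real"
  assumes mono: "mono_on {0..} f" and concave: "concave_on {0..} f"
    and "0 \<le> R" "0 \<le> c" "0 \<le> c'"
  shows "\<bar>f (R + c') - f (R + c)\<bar> \<le> \<bar>f c' - f c\<bar>"
proof -
  have *: "\<bar>f (R + y) - f (R + x)\<bar> \<le> \<bar>f y - f x\<bar>" if "0 \<le> x" "x \<le> y" for x y
  proof -
    have "f x + f (R + y) \<le> f y + f (R + x)"
      using concave_on_endpoints_le[OF concave, of x "R + y" y "R + x"] that \<open>0 \<le> R\<close> by simp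
    moreover have "f x \<le> f y" "f (R + x) \<le> f (R + y)"
      using mono_onD[OF mono] that \<open>0 \<le> R\<close> by simp_all
    ultimately show ?thesis
      by linarith
  qed
  show ?thesis
    using *[of c c'] *[of c' c] assms by (cases "c \<le> c'") (auto simp: abs_minus_commute)
qed

lemma sum_list_list_update:
  fixes xs :: "'a::ab_group_add list"
  shows "k < length xs \<Longrightarrow> sum_list (xs[k := x]) = sum_list xs - xs ! k + x"
proof (induction xs arbitrary: k)
  case (Cons y xs)
  then show ?case
    by (cases k) auto
qed simp

lemma member_le_sum_list_nonneg:
  fixes xs :: "'a::ordered_comm_monoid_add list"
  shows "x \<in> set xs \<Longrightarrow> (\<And>y. y \<in> set xs \<Longrightarrow> 0 \<le> y) \<Longrightarrow> x \<le> sum_list xs"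
  by (induction xs) (auto intro: add_increasing add_increasing2 sum_list_nonneg)

lemma groupby_sum_conv_sum_list:
  "groupby_sum G i D g = (\<Sum>r\<leftarrow>D. if G (fst r) = g then snd r i else 0)"
  by (simp add: groupby_sum_def sum_list_map_filter')

lemma groupby_sum_list_update:
  assumes "k < length D" "fst r' = fst (D ! k)"
  shows "groupby_sum G i (D[k := r']) g
    = (if G (fst r') = g then groupby_sum G i D g - snd (D ! k) i + snd r' i else groupby_sum G i D g)"
  using assms by (simp add: groupby_sum_conv_sum_list map_update sum_list_list_update)

lemma record_le_groupby_sum:
  assumes "valid_dataset m D" "i < m" "r \<in> set D"
  shows "snd r i \<le> groupby_sum G i D (G (fst r))"
  unfolding groupby_sum_def using assms
  by (intro member_le_sum_list_nonneg) (auto simp: valid_dataset_def valid_record_def)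

lemma groupby_sum_psi_neighbors:
  assumes "neighbor_function \<psi>" "i < m" "valid_dataset m D1" "valid_dataset m D2"
    and "psi_neighbors \<psi> m \<sigma> D1 D2"
  obtains g0 where "\<And>g. g \<noteq> g0 \<Longrightarrow> groupby_sum G i D1 g = groupby_sum G i D2 g"
    and "\<bar>\<psi> (groupby_sum G i D2 g0) - \<psi> (groupby_sum G i D1 g0)\<bar> \<le> \<sigma> i"
proof -
  obtain k r' where k: "k < length D2" and close: "psi_close \<psi> m \<sigma> (D2 ! k) r'"
    and D1: "D1 = D2[k := r']"
    using assms(5) by (auto simp: psi_neighbors_def)
  define r where "r = D2 ! k"
  define R where "R = groupby_sum G i D2 (G (fst r)) - snd r i"
  have "fst r' = fst r"
    using close by (simp add: psi_close_def r_def)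
  then have update: "groupby_sum G i D1 g
      = (if G (fst r) = g then groupby_sum G i D2 g - snd r i + snd r' i else groupby_sum G i D2 g)"
    for g
    using k by (simp add: D1 groupby_sum_list_update r_def)
  have "r \<in> set D2" "r' \<in> set D1"
    using k by (simp_all add: r_def D1 set_update_memI)
  then have "0 \<le> R" "0 \<le> snd r i" "0 \<le> snd r' i"
    using assms(2-4) record_le_groupby_sum[of m D2 i r G]
    by (auto simp: R_def valid_dataset_def valid_record_def)
  moreover have "mono_on {0..} \<psi>" "concave_on {0..} \<psi>"
    using assms(1) by (simp_all add: neighbor_function_def strict_mono_on_imp_mono_on)
  ultimately have "\<bar>\<psi> (R + snd r i) - \<psi> (R + snd r' i)\<bar> \<le> \<bar>\<psi> (snd r i) - \<psi> (snd r' i)\<bar>"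
    by (intro abs_diff_add_le_concave) auto
  also have "\<dots> \<le> \<sigma> i"
    using close assms(2) by (simp add: psi_close_def r_def)
  finally show ?thesis
    by (intro that[of "G (fst r)"]) (simp_all add: update R_def)
qed

theorem theorem6p5:
  fixes \<psi> :: "real \<Rightarrow> real" and m i :: nat and \<sigma> :: "nat \<Rightarrow> real" and \<mu> :: real
    and G :: "'p \<Rightarrow> 'g::finite"
  assumes "neighbor_function \<psi>"
    and "\<forall>j<m. \<sigma> j \<ge> 0"
    and "\<mu> > 0"
    and "i < m"
  shows "gaussian_establishment_dp \<mu> \<psi> m \<sigma> (neighbor_mechanism \<psi> \<sigma> \<mu> G i)"
  unfolding gaussian_establishment_dp_def
proof (intro allI impI ballI)
  fix D1 D2 :: "'p dataset" and S
  assume "valid_dataset m D1" "valid_dataset m D2" "psi_neighbors \<psi> m \<sigma> D1 D2"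
    and S: "S \<in> sets (neighbor_mechanism \<psi> \<sigma> \<mu> G i D1)"
  then obtain g0 where "\<And>g. g \<noteq> g0 \<Longrightarrow> groupby_sum G i D1 g = groupby_sum G i D2 g"
    and "\<bar>\<psi> (groupby_sum G i D2 g0) - \<psi> (groupby_sum G i D1 g0)\<bar> \<le> \<sigma> i"
    using groupby_sum_psi_neighbors[OF assms(1,4)] by metis
  with assms(2-4) S show "Phi_inv (measure (neighbor_mechanism \<psi> \<sigma> \<mu> G i D2) S)
      \<le> Phi_inv (measure (neighbor_mechanism \<psi> \<sigma> \<mu> G i D1) S) + ereal \<mu>"
    unfolding neighbor_mechanism_def
    by (intro Phi_inv_gaussian_vector_le) (auto simp: gaussian_vector_def)
qed

end
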